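(* For every integer $n\ge 1$, let $\overline{P}(n)_2$ be the $n\times n$ integer matrix with entries $\overline{p}_{i,j}\in\{0,1\}$, $0\le i,j<n$, defined by $\overline{p}_{i,j}\equiv\binom{i+j}{i}\pmod 2$. Then the determinant over $\mathbf{Z}$ satisfies $$\det(\overline{P}(n)_2)=\prod_{k=0}^{n-1}(-1)^{s_k},$$ where $s_k$ is the Thue–Morse sequence.
   Context: The Thue–Morse sequence is defined by $s_k=\sum_i\nu_i \pmod 2\in\{0,1\}$ where $k=\sum_i \nu_i 2^i$ is the binary expansion of $k$; equivalently $s_0=0$, $s_{2k}=s_k$, $s_{2k+1}=1-s_k$. *)

theory Defs
  imports Jordan_Normal_Form.Determinant
begin

fun binary_digit_sum :: "nat \<Rightarrow> nat" where
  "binary_digit_sum k = (if k = 0 then 0 else k mod 2 + binary_digit_sum (k div 2))"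

definition thue_morse :: "nat \<Rightarrow> nat" where
  "thue_morse k = binary_digit_sum k mod 2"

definition pascal_mod2 :: "nat \<Rightarrow> int mat" where
  "pascal_mod2 n = mat n n (\<lambda>(i, j). int (((i + j) choose i) mod 2))"

end

(*
  By Lucas's theorem modulo 2, binom(i + j, i) is odd iff i and j have no binary digit in
  common, i.e. i AND j = 0. The same indicator arises as the sum of (-1)^(s k) over the common
  submasks k of i and j, which are the submasks of i AND j: for m > 0 these cancel in pairs
  differing in one bit of m. Hence the matrix factors as (L D) L^T with L(i,k) = [k submask of i]
  unitriangular and D = diag((-1)^(s k)), and its determinant is the product of the diagonal of D.
*)
theory Submission
  imports Defs
begin

unbundle bit_operations_syntax

declare binary_digit_sum.simps [simp del]

lemma parity_choose_Suc_double:
  assumes "\<And>k. even (2 * m choose Suc (2 * k))"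
    and "\<And>k. odd (2 * m choose (2 * k)) \<longleftrightarrow> odd (m choose k)"
  shows "odd (Suc (2 * m) choose (2 * k)) \<longleftrightarrow> odd (m choose k)"
    and "odd (Suc (2 * m) choose Suc (2 * k)) \<longleftrightarrow> odd (m choose k)"
proof -
  show "odd (Suc (2 * m) choose (2 * k)) \<longleftrightarrow> odd (m choose k)"
  proof (cases k)
    case (Suc l)
    then have "Suc (2 * m) choose (2 * k) = (2 * m choose Suc (2 * l)) + (2 * m choose (2 * k))"
      by simp
    then show ?thesis using assms by simp
  qed simp
  show "odd (Suc (2 * m) choose Suc (2 * k)) \<longleftrightarrow> odd (m choose k)"
    using assms by simp
qed

lemma parity_choose_double:
  "even (2 * m choose Suc (2 * k)) \<and> (odd (2 * m choose (2 * k)) \<longleftrightarrow> odd (m choose k))"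
proof (induction m arbitrary: k)
  case 0
  then show ?case by (cases k) simp_all
next
  case (Suc m)
  note odd_row = parity_choose_Suc_double[of m, OF conjunct1[OF Suc.IH] conjunct2[OF Suc.IH]]
  have "2 * Suc m choose Suc (2 * k) = (Suc (2 * m) choose (2 * k)) + (Suc (2 * m) choose Suc (2 * k))"
    by simp
  then have "even (2 * Suc m choose Suc (2 * k))"
    using odd_row[of k] by (simp del: binomial_Suc_Suc)
  moreover have "odd (2 * Suc m choose (2 * k)) \<longleftrightarrow> odd (Suc m choose k)"
  proof (cases k)
    case (Suc l)
    then have "2 * Suc m choose (2 * k) = (Suc (2 * m) choose Suc (2 * l)) + (Suc (2 * m) choose (2 * k))"
      by simp
    then show ?thesis using odd_row[of l] odd_row[of k] binomial_Suc_Suc[of m l] Suc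
      by (simp del: binomial_Suc_Suc)
  qed simp
  ultimately show ?case ..
qed

lemma odd_choose_add_iff_halves:
  "odd ((i + j) choose i) \<longleftrightarrow> \<not> (odd i \<and> odd j) \<and> odd ((i div 2 + j div 2) choose (i div 2))"
proof -
  note even_row = parity_choose_double
  note odd_row = parity_choose_Suc_double[OF conjunct1[OF even_row] conjunct2[OF even_row]]
  obtain a b where i: "i = 2 * a \<or> i = Suc (2 * a)" and j: "j = 2 * b \<or> j = Suc (2 * b)"
    by (metis evenE oddE Suc_eq_plus1)
  then consider
      "i = 2 * a" "i + j = 2 * (a + b)" "j div 2 = b" "\<not> (odd i \<and> odd j)"
    | "i = 2 * a" "i + j = Suc (2 * (a + b))" "j div 2 = b" "\<not> (odd i \<and> odd j)"
    | "i = Suc (2 * a)" "i + j = Suc (2 * (a + b))" "j div 2 = b" "\<not> (odd i \<and> odd j)"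
    | "i = Suc (2 * a)" "i + j = 2 * Suc (a + b)" "odd i \<and> odd j"
    by fastforce
  then show ?thesis
    by cases (use even_row[of "a + b" a] odd_row[of "a + b" a] even_row[of "Suc (a + b)" a] in
      \<open>simp_all del: binomial_Suc_Suc\<close>)
qed

lemma odd_choose_add_iff_and_eq_0: "odd ((i + j) choose i) \<longleftrightarrow> i AND j = 0"
proof (induction i arbitrary: j rule: less_induct)
  case (less i)
  show ?case
  proof (cases "i = 0")
    case False
    then show ?thesis
      using less[of "i div 2" "j div 2"] odd_choose_add_iff_halves[of i j] and_nat_rec[of i j]
      by auto
  qed simp
qed

definition submask :: "nat \<Rightarrow> nat \<Rightarrow> bool" where
  "submask k m \<longleftrightarrow> k AND m = k"

lemma submask_iff_halves: "submask k m \<longleftrightarrow> (odd k \<longrightarrow> odd m) \<and> submask (k div 2) (m div 2)"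
proof -
  have "k AND m = of_bool (odd k \<and> odd m) + 2 * (k div 2 AND m div 2)"
    by (rule and_nat_rec)
  moreover have "of_bool (odd k) + 2 * (k div 2) = k"
    by simp
  ultimately show ?thesis
    unfolding submask_def by (cases "odd k"; cases "odd m") (auto, presburger+)
qed

lemma submask_zero_iff: "submask k 0 \<longleftrightarrow> k = 0"
  by (simp add: submask_def)

lemma submask_le: "submask k m \<Longrightarrow> k \<le> m"
proof (induction m arbitrary: k rule: less_induct)
  case (less m)
  show ?case
  proof (cases "m = 0")
    case False
    then have "odd k \<longrightarrow> odd m" "k div 2 \<le> m div 2"
      using less submask_iff_halves[of k m] by auto
    then show ?thesis
      by presburger
  qed (use less.prems submask_zero_iff in simp)
qed

lemma submask_refl: "submask m m"
  by (simp add: submask_def)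

lemma submask_iff_bit: "submask k m \<longleftrightarrow> (\<forall>n. bit k n \<longrightarrow> bit m n)"
  unfolding submask_def by (auto simp: bit_eq_iff bit_and_iff)

lemma submask_and_iff: "submask k (i AND j) \<longleftrightarrow> submask k i \<and> submask k j"
  by (auto simp: submask_iff_bit bit_and_iff)

lemma finite_submasks: "finite {k. submask k m}"
  by (rule finite_subset[of _ "{..m}"]) (auto dest: submask_le)

lemma submasks_eq_halves:
  "{k. submask k m} = (\<lambda>k. 2 * k) ` {k. submask k (m div 2)}
     \<union> (if odd m then (\<lambda>k. Suc (2 * k)) ` {k. submask k (m div 2)} else {})"
  (is "?S = ?E \<union> ?O")
proof
  show "?S \<subseteq> ?E \<union> ?O"
  proof
    fix k assume "k \<in> ?S"
    then have "odd k \<longrightarrow> odd m" "submask (k div 2) (m div 2)"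
      using submask_iff_halves[of k m] by auto
    then show "k \<in> ?E \<union> ?O"
      by (cases "even k") (auto elim!: evenE oddE)
  qed
  show "?E \<union> ?O \<subseteq> ?S"
    by (auto simp: submask_iff_halves[of "2 * _"] submask_iff_halves[of "Suc (2 * _)"])
qed

lemma binary_digit_sum_double: "binary_digit_sum (2 * k) = binary_digit_sum k"
  by (cases "k = 0") (simp_all add: binary_digit_sum.simps[of "2 * k"] binary_digit_sum.simps[of 0])

lemma binary_digit_sum_Suc_double: "binary_digit_sum (Suc (2 * k)) = Suc (binary_digit_sum k)"
  by (simp add: binary_digit_sum.simps[of "Suc (2 * k)"])

lemma sum_submasks_minus_one_power:
  "(\<Sum>k | submask k m. (-1::'a::ring_1) ^ binary_digit_sum k) = of_bool (m = 0)"
proof (induction m rule: less_induct)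
  case (less m)
  show ?case
  proof (cases "m = 0")
    case True
    then show ?thesis
      by (simp add: submask_zero_iff binary_digit_sum.simps[of 0])
  next
    case False
    define S where "S = {k. submask k (m div 2)}"
    define s where "s = (\<Sum>k\<in>S. (-1::'a) ^ binary_digit_sum k)"
    have evens: "(\<Sum>k\<in>(\<lambda>k. 2 * k) ` S. (-1::'a) ^ binary_digit_sum k) = s"
      by (simp add: sum.reindex inj_on_def s_def binary_digit_sum_double)
    have odds: "(\<Sum>k\<in>(\<lambda>k. Suc (2 * k)) ` S. (-1::'a) ^ binary_digit_sum k) = - s"
      by (simp add: sum.reindex inj_on_def s_def binary_digit_sum_Suc_double sum_negf)
    have "finite S"
      by (simp add: S_def finite_submasks)
    have disjoint: "(\<lambda>k. 2 * k) ` S \<inter> (\<lambda>k. Suc (2 * k)) ` S = {}"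
      by (auto dest: arg_cong[where f = even])
    show ?thesis
    proof (cases "odd m")
      case True
      then have "(\<Sum>k | submask k m. (-1::'a) ^ binary_digit_sum k) = s + - s"
        unfolding submasks_eq_halves[of m] S_def[symmetric]
        by (simp add: sum.union_disjoint \<open>finite S\<close> disjoint evens odds)
      then show ?thesis
        using False by simp
    next
      case False
      with \<open>m \<noteq> 0\<close> have "m div 2 < m" "m div 2 \<noteq> 0"
        by auto
      then have "s = 0"
        using less unfolding s_def S_def by simp
      then show ?thesis
        using False \<open>m \<noteq> 0\<close> evens unfolding submasks_eq_halves[of m] S_def[symmetric]
        by simp
    qed
  qed
qed

definition submask_mat :: "nat \<Rightarrow> int mat" where
  "submask_mat n = mat n n (\<lambda>(k, j). of_bool (submask k j))"

definition signed_submask_mat :: "nat \<Rightarrow> int mat" where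
  "signed_submask_mat n = mat n n (\<lambda>(i, k). of_bool (submask k i) * (-1) ^ binary_digit_sum k)"

lemma pascal_mod2_eq_mult: "pascal_mod2 n = signed_submask_mat n * submask_mat n"
proof (rule eq_matI)
  fix i j
  assume "i < dim_row (signed_submask_mat n * submask_mat n)"
    and "j < dim_col (signed_submask_mat n * submask_mat n)"
  then have i: "i < n" and j: "j < n"
    by (simp_all add: signed_submask_mat_def submask_mat_def)
  have "(signed_submask_mat n * submask_mat n) $$ (i, j)
      = (\<Sum>k<n. signed_submask_mat n $$ (i, k) * submask_mat n $$ (k, j))"
    using i j by (simp add: signed_submask_mat_def submask_mat_def scalar_prod_def atLeast0LessThan)
  also have "\<dots> = (\<Sum>k<n. if submask k i \<and> submask k j then (-1) ^ binary_digit_sum k else 0)"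
    using i j by (intro sum.cong) (auto simp: signed_submask_mat_def submask_mat_def)
  also have "\<dots> = (\<Sum>k \<in> {k \<in> {..<n}. submask k i \<and> submask k j}. (-1) ^ binary_digit_sum k)"
    by (rule sum.inter_filter[symmetric]) simp
  also have "\<dots> = (\<Sum>k | submask k (i AND j). (-1) ^ binary_digit_sum k)"
    using i by (intro sum.cong) (auto simp: submask_and_iff dest: submask_le)
  also have "\<dots> = of_bool (i AND j = 0)"
    by (rule sum_submasks_minus_one_power)
  also have "\<dots> = pascal_mod2 n $$ (i, j)"
    using i j by (simp add: pascal_mod2_def odd_iff_mod_2_eq_one flip: odd_choose_add_iff_and_eq_0)
  finally show "pascal_mod2 n $$ (i, j) = (signed_submask_mat n * submask_mat n) $$ (i, j)"
    by simp
qed (simp_all add: pascal_mod2_def signed_submask_mat_def submask_mat_def)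

lemma det_submask_mat: "det (submask_mat n) = 1"
proof -
  have "det (submask_mat n) = prod_list (diag_mat (submask_mat n))"
    by (rule det_upper_triangular[of _ n])
      (auto simp: submask_mat_def upper_triangular_def dest: submask_le)
  also have "\<dots> = 1"
    by (simp add: prod_list_diag_prod submask_mat_def submask_refl)
  finally show ?thesis .
qed

lemma det_signed_submask_mat:
  "det (signed_submask_mat n) = (\<Prod>k<n. (-1) ^ binary_digit_sum k)"
proof -
  have "det (signed_submask_mat n) = prod_list (diag_mat (signed_submask_mat n))"
    by (rule det_lower_triangular[of n])
      (auto simp: signed_submask_mat_def dest: submask_le)
  also have "\<dots> = (\<Prod>k<n. (-1) ^ binary_digit_sum k)"
    by (simp add: prod_list_diag_prod signed_submask_mat_def submask_refl atLeast0LessThan)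
  finally show ?thesis .
qed

theorem theorem1p1:
  fixes n :: nat
  assumes "n \<ge> 1"
  shows "det (pascal_mod2 n) = (\<Prod>k<n. (-1::int) ^ thue_morse k)"
proof -
  have "det (pascal_mod2 n) = det (signed_submask_mat n) * det (submask_mat n)"
    unfolding pascal_mod2_eq_mult
    by (rule det_mult[of _ n]) (simp_all add: signed_submask_mat_def submask_mat_def)
  also have "\<dots> = (\<Prod>k<n. (-1) ^ binary_digit_sum k)"
    by (simp add: det_signed_submask_mat det_submask_mat)
  also have "\<dots> = (\<Prod>k<n. (-1::int) ^ thue_morse k)"
    by (intro prod.cong) (simp_all add: thue_morse_def minus_one_power_iff)
  finally show ?thesis .
qed

end
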